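(* The triple $(X,\tau,\mathcal{P})$ is a $\mathcal{P}P$-space if and only if every essential ideal of $C(X)_\mathcal{P}$ is a $z$-ideal.
   Context: Let $(X,\tau)$ be a $T_1$ topological space and $\mathcal{P}$ an ideal of closed subsets of $X$ (a nonempty family of closed sets closed under finite unions and under taking closed subsets). For $f\colon X\to\mathbb{R}$, $D_f$ denotes the set of points of discontinuity of $f$, and $C(X)_\mathcal{P}=\{f\colon X\to\mathbb{R} : \overline{D_f}\in\mathcal{P}\}$, a commutative ring with unity under pointwise operations. $(X,\tau,\mathcal{P})$ is a $\mathcal{P}P$-space if $C(X)_\mathcal{P}$ is von Neumann regular. An ideal is essential if it intersects every nonzero ideal nontrivially. In a commutative ring, $M(a)$ is the intersection of all maximal ideals containing $a$; an ideal $I$ is a $z$-ideal if $a\in I\Rightarrow M(a)\subseteq I$. *)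

theory Defs
  imports "HOL-Analysis.Analysis" "HOL-Algebra.Ideal"
begin

definition disc_points :: "'a topology \<Rightarrow> ('a \<Rightarrow> real) \<Rightarrow> 'a set" where
  "disc_points X f = {x \<in> topspace X. \<not> (\<forall>V. open V \<and> f x \<in> V \<longrightarrow>
        (\<exists>U. openin X U \<and> x \<in> U \<and> f ` U \<subseteq> V))}"

definition closed_ideal :: "'a topology \<Rightarrow> 'a set set \<Rightarrow> bool" where
  "closed_ideal X P \<longleftrightarrow> P \<noteq> {} \<and> (\<forall>A\<in>P. closedin X A)
     \<and> (\<forall>A\<in>P. \<forall>B\<in>P. A \<union> B \<in> P)
     \<and> (\<forall>A\<in>P. \<forall>B. closedin X B \<and> B \<subseteq> A \<longrightarrow> B \<in> P)"

text \<open>The ring C(X)_P. Functions X \<rightarrow> R are represented as functions on the whole type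
  that vanish outside topspace X (so that each function on X has a unique representative).\<close>
definition CP_carrier :: "'a topology \<Rightarrow> 'a set set \<Rightarrow> ('a \<Rightarrow> real) set" where
  "CP_carrier X P = {f. (\<forall>x. x \<notin> topspace X \<longrightarrow> f x = 0) \<and> X closure_of (disc_points X f) \<in> P}"

definition CP_ring :: "'a topology \<Rightarrow> 'a set set \<Rightarrow> ('a \<Rightarrow> real) ring" where
  "CP_ring X P = \<lparr>carrier = CP_carrier X P,
                  mult = (\<lambda>f g x. f x * g x),
                  one = (\<lambda>x. if x \<in> topspace X then 1 else 0),
                  zero = (\<lambda>x. 0),
                  add = (\<lambda>f g x. f x + g x)\<rparr>"

definition von_neumann_regular :: "('b, 'm) ring_scheme \<Rightarrow> bool" where
  "von_neumann_regular R \<longleftrightarrow>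
     (\<forall>a\<in>carrier R. \<exists>b\<in>carrier R. a = a \<otimes>\<^bsub>R\<^esub> b \<otimes>\<^bsub>R\<^esub> a)"

definition PP_space :: "'a topology \<Rightarrow> 'a set set \<Rightarrow> bool" where
  "PP_space X P \<longleftrightarrow> von_neumann_regular (CP_ring X P)"

definition essential_ideal :: "'b set \<Rightarrow> ('b, 'm) ring_scheme \<Rightarrow> bool" where
  "essential_ideal I R \<longleftrightarrow> ideal I R \<and>
     (\<forall>J. ideal J R \<and> J \<noteq> {\<zero>\<^bsub>R\<^esub>} \<longrightarrow> I \<inter> J \<noteq> {\<zero>\<^bsub>R\<^esub>})"

text \<open>M(a): intersection of all maximal ideals containing a (the whole ring if there are none).\<close>
definition M_ideal :: "('b, 'm) ring_scheme \<Rightarrow> 'b \<Rightarrow> 'b set" where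
  "M_ideal R a = carrier R \<inter> \<Inter>{M. maximalideal M R \<and> a \<in> M}"

definition z_ideal :: "'b set \<Rightarrow> ('b, 'm) ring_scheme \<Rightarrow> bool" where
  "z_ideal I R \<longleftrightarrow> ideal I R \<and> (\<forall>a\<in>I. M_ideal R a \<subseteq> I)"

end

theory Submission
  imports Defs
begin

text \<open>
  If \<open>C(X)\<^sub>P\<close> is von Neumann regular and \<open>a = a b a\<close>, then \<open>a b\<close> is the indicator of the
  cozero set of \<open>a\<close>. The point ideals \<open>{f. f p = 0}\<close> are maximal, so every \<open>x \<in> M(a)\<close>
  vanishes on the zero set of \<open>a\<close>, whence \<open>x = (b x) a\<close> lies in every ideal containing \<open>a\<close>.

  Conversely, in any commutative ring \<open>a R + Ann(a)\<close> is essential: a nonzero \<open>k\<close> either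
  annihilates \<open>a\<close> or gives the nonzero multiple \<open>k a\<close>. The cube root \<open>g\<close> of \<open>f\<close> stays in
  \<open>C(X)\<^sub>P\<close>, since it is continuous wherever \<open>f\<close> is, and it lies in \<open>M(f)\<close> because maximal
  ideals are prime. If essential ideals are \<open>z\<close>-ideals, \<open>g = h f + k\<close> with \<open>k f = 0\<close>, and
  pointwise \<open>f = g\<^sup>3 = f (h\<^sup>2 g) f\<close>.
\<close>

definition annihilator :: "('b, 'm) ring_scheme \<Rightarrow> 'b \<Rightarrow> 'b set" where
  "annihilator R a = {x \<in> carrier R. x \<otimes>\<^bsub>R\<^esub> a = \<zero>\<^bsub>R\<^esub>}"

lemma set_add_memI: "h \<in> H \<Longrightarrow> k \<in> K \<Longrightarrow> h \<oplus>\<^bsub>G\<^esub> k \<in> H <+>\<^bsub>G\<^esub> K"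
  unfolding set_add_def' by blast

context cring
begin

lemma ideal_annihilator:
  assumes "a \<in> carrier R"
  shows "ideal (annihilator R a) R"
proof (rule idealI[OF ring_axioms])
  show "subgroup (annihilator R a) (add_monoid R)"
    by (rule subgroup.intro) (use assms in \<open>auto simp: annihilator_def l_distr l_minus simp flip: a_inv_def\<close>)
next
  fix b x assume b: "b \<in> annihilator R a" and x: "x \<in> carrier R"
  then have "x \<otimes> b \<otimes> a = \<zero>"
    using assms by (simp add: annihilator_def m_assoc)
  then show "x \<otimes> b \<in> annihilator R a" "b \<otimes> x \<in> annihilator R a"
    using b x by (auto simp: annihilator_def m_comm)
qed

lemma cgenideal_memI: "x \<in> carrier R \<Longrightarrow> x \<otimes> a \<in> PIdl a"
  unfolding cgenideal_def by blast

lemma essential_ideal_cgenideal_add_annihilator: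
  assumes a: "a \<in> carrier R"
  shows "essential_ideal (PIdl a <+> annihilator R a) R"
  unfolding essential_ideal_def
proof (intro conjI allI impI)
  show "ideal (PIdl a <+> annihilator R a) R"
    using add_ideals[OF cgenideal_ideal[OF a] ideal_annihilator[OF a]] .
  fix J assume "ideal J R \<and> J \<noteq> {\<zero>}"
  then have J: "ideal J R" "J \<noteq> {\<zero>}" by simp_all
  have "\<zero> \<in> J"
    using additive_subgroup.zero_closed[OF ideal.axioms(1)[OF J(1)]] .
  then obtain k where k: "k \<in> J" "k \<noteq> \<zero>"
    using J(2) by blast
  have kR: "k \<in> carrier R" using ideal.Icarr[OF J(1) k(1)] .
  show "(PIdl a <+> annihilator R a) \<inter> J \<noteq> {\<zero>}"
  proof (cases "k \<otimes> a = \<zero>")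
    case True
    then have "\<zero> \<otimes> a \<oplus> k \<in> PIdl a <+> annihilator R a"
      using a kR by (intro set_add_memI cgenideal_memI) (auto simp: annihilator_def)
    then show ?thesis using a kR k by auto
  next
    case False
    have "k \<otimes> a \<oplus> \<zero> \<in> PIdl a <+> annihilator R a"
      using a kR by (intro set_add_memI cgenideal_memI) (auto simp: annihilator_def)
    moreover have "k \<otimes> a \<in> J" using ideal.I_r_closed[OF J(1) k(1) a] .
    ultimately show ?thesis using a kR False by auto
  qed
qed

lemma M_ideal_subset_cgenideal_add_annihilator:
  assumes "\<forall>I. essential_ideal I R \<longrightarrow> z_ideal I R" and a: "a \<in> carrier R"
  shows "M_ideal R a \<subseteq> PIdl a <+> annihilator R a"
proof -
  have "\<one> \<otimes> a \<oplus> \<zero> \<in> PIdl a <+> annihilator R a"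
    using a by (intro set_add_memI cgenideal_memI) (auto simp: annihilator_def)
  then have "a \<in> PIdl a <+> annihilator R a" using a by simp
  then show ?thesis
    using assms essential_ideal_cgenideal_add_annihilator unfolding z_ideal_def by blast
qed

lemma cube_root_in_M_ideal:
  assumes b: "b \<in> carrier R"
  shows "b \<in> M_ideal R (b \<otimes> b \<otimes> b)"
  unfolding M_ideal_def
proof (intro IntI InterI b)
  fix M assume "M \<in> {M. maximalideal M R \<and> b \<otimes> b \<otimes> b \<in> M}"
  then have "primeideal M R" and "b \<otimes> b \<otimes> b \<in> M"
    using maximalideal_prime by auto
  then show "b \<in> M" using b by (metis m_closed primeideal.I_prime)
qed

end

lemma disc_points_subset_topspace: "disc_points X f \<subseteq> topspace X"
  unfolding disc_points_def by auto

lemma not_disc_point_compose2: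
  fixes f g h :: "'a \<Rightarrow> real" and \<phi> :: "real \<times> real \<Rightarrow> real"
  assumes x: "x \<in> topspace X" and f: "x \<notin> disc_points X f" and g: "x \<notin> disc_points X g"
    and \<phi>: "isCont \<phi> (f x, g x)" and h: "\<forall>y\<in>topspace X. h y = \<phi> (f y, g y)"
  shows "x \<notin> disc_points X h"
proof -
  have "\<exists>U. openin X U \<and> x \<in> U \<and> h ` U \<subseteq> V" if V: "open V" "h x \<in> V" for V
  proof -
    have "\<phi> (f x, g x) \<in> V" using V h x by simp
    then obtain W where W: "open W" "(f x, g x) \<in> W" "\<forall>z\<in>W. \<phi> z \<in> V"
      using \<phi> V(1) unfolding continuous_at_open by blast
    then obtain A B where AB: "open A" "open B" "(f x, g x) \<in> A \<times> B" "A \<times> B \<subseteq> W"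
      by (metis open_prod_elim)
    obtain U1 where U1: "openin X U1" "x \<in> U1" "f ` U1 \<subseteq> A"
      using f x AB unfolding disc_points_def by blast
    obtain U2 where U2: "openin X U2" "x \<in> U2" "g ` U2 \<subseteq> B"
      using g x AB unfolding disc_points_def by blast
    have "h y \<in> V" if y: "y \<in> U1 \<inter> U2" for y
    proof -
      have "y \<in> topspace X" using U1 y openin_subset by blast
      moreover have "(f y, g y) \<in> W" using AB U1 U2 y by blast
      ultimately show ?thesis using W h by simp
    qed
    then show ?thesis using U1 U2 by (intro exI[of _ "U1 \<inter> U2"]) auto
  qed
  then show ?thesis unfolding disc_points_def by blast
qed

lemma disc_points_const: "disc_points X (\<lambda>x. if x \<in> topspace X then c else 0) = {}"
  unfolding disc_points_def by (force intro: exI[of _ "topspace X"])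

lemma closed_ideal_Un:
  assumes "closed_ideal X P" "A \<in> P" "B \<in> P"
  shows "A \<union> B \<in> P"
proof -
  have "\<forall>A\<in>P. \<forall>B\<in>P. A \<union> B \<in> P"
    using assms(1) unfolding closed_ideal_def by (elim conjE)
  then show ?thesis using assms(2,3) by blast
qed

lemma closed_ideal_closedin_subset:
  assumes "closed_ideal X P" "A \<in> P" "closedin X B" "B \<subseteq> A"
  shows "B \<in> P"
proof -
  have "\<forall>A\<in>P. \<forall>B. closedin X B \<and> B \<subseteq> A \<longrightarrow> B \<in> P"
    using assms(1) unfolding closed_ideal_def by (elim conjE)
  then show ?thesis using assms(2-4) by blast
qed

lemma closed_ideal_empty:
  assumes "closed_ideal X P"
  shows "{} \<in> P"
proof -
  have "P \<noteq> {}" using assms unfolding closed_ideal_def by (elim conjE)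
  then obtain A where "A \<in> P" by blast
  then show ?thesis using closed_ideal_closedin_subset[OF assms] by simp
qed

lemma closed_ideal_closure_of_subset_Un:
  assumes P: "closed_ideal X P" and "X closure_of A \<in> P" "X closure_of B \<in> P" "C \<subseteq> A \<union> B"
  shows "X closure_of C \<in> P"
proof (rule closed_ideal_closedin_subset[OF P closed_ideal_Un[OF assms(1-3)]])
  show "X closure_of C \<subseteq> X closure_of A \<union> X closure_of B"
    using assms(4) by (metis closure_of_Un closure_of_mono)
qed simp

lemma CP_carrier_compose2:
  fixes f g h :: "'a \<Rightarrow> real" and \<phi> :: "real \<times> real \<Rightarrow> real"
  assumes P: "closed_ideal X P" and f: "f \<in> CP_carrier X P" and g: "g \<in> CP_carrier X P"
    and h: "\<forall>y\<in>topspace X. h y = \<phi> (f y, g y)" "\<And>y. y \<notin> topspace X \<Longrightarrow> h y = 0"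
    and \<phi>: "\<And>y. y \<in> topspace X \<Longrightarrow> y \<notin> disc_points X f \<Longrightarrow> y \<notin> disc_points X g
                \<Longrightarrow> isCont \<phi> (f y, g y)"
  shows "h \<in> CP_carrier X P"
proof -
  have disc: "disc_points X h \<subseteq> disc_points X f \<union> disc_points X g"
  proof
    fix y assume y: "y \<in> disc_points X h"
    have yX: "y \<in> topspace X" using disc_points_subset_topspace y ..
    show "y \<in> disc_points X f \<union> disc_points X g"
    proof (rule ccontr)
      assume "y \<notin> disc_points X f \<union> disc_points X g"
      then have nf: "y \<notin> disc_points X f" and ng: "y \<notin> disc_points X g" by simp_all
      have "y \<notin> disc_points X h"
        by (rule not_disc_point_compose2[OF yX nf ng \<phi>[OF yX nf ng] h(1)])
      then show False using y by contradiction
    qed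
  qed
  have "X closure_of disc_points X f \<in> P" "X closure_of disc_points X g \<in> P"
    using f g unfolding CP_carrier_def by simp_all
  then have "X closure_of disc_points X h \<in> P"
    by (rule closed_ideal_closure_of_subset_Un[OF P _ _ disc])
  then show ?thesis using h(2) unfolding CP_carrier_def by simp
qed

lemma CP_ring_simps [simp]:
  "carrier (CP_ring X P) = CP_carrier X P"
  "mult (CP_ring X P) = (\<lambda>f g x. f x * g x)"
  "add (CP_ring X P) = (\<lambda>f g x. f x + g x)"
  "one (CP_ring X P) = (\<lambda>x. if x \<in> topspace X then 1 else 0)"
  "zero (CP_ring X P) = (\<lambda>x. 0)"
  by (simp_all add: CP_ring_def)

context
  fixes X :: "'a topology" and P :: "'a set set"
  assumes P: "closed_ideal X P"
begin

lemma CP_carrier_const: "(\<lambda>x. if x \<in> topspace X then c else 0) \<in> CP_carrier X P"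
  unfolding CP_carrier_def using closed_ideal_empty[OF P] by (simp add: disc_points_const)

lemma CP_carrier_zero: "(\<lambda>x. 0) \<in> CP_carrier X P"
  using CP_carrier_const[of 0] by simp

lemma CP_carrier_vanishes: "f \<in> CP_carrier X P \<Longrightarrow> x \<notin> topspace X \<Longrightarrow> f x = 0"
  unfolding CP_carrier_def by simp

lemma CP_carrier_add:
  assumes "f \<in> CP_carrier X P" "g \<in> CP_carrier X P"
  shows "(\<lambda>x. f x + g x) \<in> CP_carrier X P"
  by (rule CP_carrier_compose2[OF P assms, where \<phi>="\<lambda>z. fst z + snd z"])
    (use assms in \<open>auto simp: CP_carrier_vanishes intro!: continuous_intros\<close>)

lemma CP_carrier_mult:
  assumes "f \<in> CP_carrier X P" "g \<in> CP_carrier X P"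
  shows "(\<lambda>x. f x * g x) \<in> CP_carrier X P"
  by (rule CP_carrier_compose2[OF P assms, where \<phi>="\<lambda>z. fst z * snd z"])
    (use assms in \<open>auto simp: CP_carrier_vanishes intro!: continuous_intros\<close>)

lemma CP_carrier_uminus:
  assumes "f \<in> CP_carrier X P"
  shows "(\<lambda>x. - f x) \<in> CP_carrier X P"
  by (rule CP_carrier_compose2[OF P assms assms, where \<phi>="\<lambda>z. - fst z"])
    (use assms in \<open>auto simp: CP_carrier_vanishes intro!: continuous_intros\<close>)

lemma CP_carrier_cube_root:
  assumes "f \<in> CP_carrier X P"
  shows "(\<lambda>x. root 3 (f x)) \<in> CP_carrier X P"
  by (rule CP_carrier_compose2[OF P assms assms, where \<phi>="\<lambda>z. root 3 (fst z)"])
    (use assms in \<open>auto simp: CP_carrier_vanishes intro!: continuous_intros\<close>)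

lemma cring_CP_ring: "cring (CP_ring X P)"
proof (rule cringI)
  show "abelian_group (CP_ring X P)"
  proof (rule abelian_groupI)
    fix f assume "f \<in> carrier (CP_ring X P)"
    then show "\<exists>g\<in>carrier (CP_ring X P). g \<oplus>\<^bsub>CP_ring X P\<^esub> f = \<zero>\<^bsub>CP_ring X P\<^esub>"
      by (intro bexI[of _ "\<lambda>x. - f x"]) (simp_all add: CP_carrier_uminus)
  qed (auto simp: CP_carrier_add CP_carrier_zero algebra_simps)
  show "comm_monoid (CP_ring X P)"
    by (rule comm_monoidI)
      (auto simp: CP_carrier_mult CP_carrier_const CP_carrier_vanishes algebra_simps fun_eq_iff)
qed (auto simp: fun_eq_iff algebra_simps)

lemma a_inv_CP_ring: "f \<in> CP_carrier X P \<Longrightarrow> \<ominus>\<^bsub>CP_ring X P\<^esub> f = (\<lambda>x. - f x)"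
  using abelian_group.minus_equality[OF cring.axioms(1)[OF cring_CP_ring, THEN ring.is_abelian_group]]
  by (simp add: CP_carrier_uminus)

lemma ideal_vanishing_at: "ideal {f \<in> CP_carrier X P. f p = 0} (CP_ring X P)"
  (is "ideal ?M _")
proof (rule idealI[OF cring.axioms(1)[OF cring_CP_ring]])
  show "subgroup ?M (add_monoid (CP_ring X P))"
  proof (rule subgroup.intro)
    fix f assume f: "f \<in> ?M"
    then have "inv\<^bsub>add_monoid (CP_ring X P)\<^esub> f = (\<lambda>x. - f x)"
      using a_inv_CP_ring[of f] unfolding a_inv_def by simp
    then show "inv\<^bsub>add_monoid (CP_ring X P)\<^esub> f \<in> ?M"
      using f CP_carrier_uminus by simp
  next
    fix f g assume "f \<in> ?M" "g \<in> ?M"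
    then show "f \<otimes>\<^bsub>add_monoid (CP_ring X P)\<^esub> g \<in> ?M"
      by (simp add: CP_carrier_add)
  qed (simp_all add: CP_carrier_zero subset_iff)
next
  fix f g assume "f \<in> ?M" "g \<in> carrier (CP_ring X P)"
  then show "g \<otimes>\<^bsub>CP_ring X P\<^esub> f \<in> ?M" "f \<otimes>\<^bsub>CP_ring X P\<^esub> g \<in> ?M"
    by (simp_all add: CP_carrier_mult)
qed

lemma maximalideal_vanishing_at:
  assumes p: "p \<in> topspace X"
  shows "maximalideal {f \<in> CP_carrier X P. f p = 0} (CP_ring X P)" (is "maximalideal ?M _")
proof (rule maximalidealI[OF ideal_vanishing_at])
  show "carrier (CP_ring X P) \<noteq> ?M"
  proof
    assume "carrier (CP_ring X P) = ?M"
    then have "\<one>\<^bsub>CP_ring X P\<^esub> \<in> ?M" using CP_carrier_const[of 1] by simp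
    then show False using p by simp
  qed
  fix J assume J: "ideal J (CP_ring X P)" "?M \<subseteq> J" "J \<subseteq> carrier (CP_ring X P)"
  show "J = ?M \<or> J = carrier (CP_ring X P)"
  proof (cases "J = ?M")
    case False
    then obtain g where g: "g \<in> J" "g p \<noteq> 0" using J(2,3) by auto
    have gC: "g \<in> CP_carrier X P" using g J(3) by auto
    define c where "c = (\<lambda>x. if x \<in> topspace X then inverse (g p) else 0)"
    define m where "m = (\<lambda>x. if x \<in> topspace X then 1 - g x / g p else 0)"
    have "m \<in> CP_carrier X P" unfolding m_def
      by (rule CP_carrier_compose2[OF P gC gC, where \<phi>="\<lambda>z. 1 - fst z / g p"])
        (use g(2) in \<open>auto intro!: continuous_intros\<close>)
    then have "m \<in> J" using J(2) g(2) p unfolding m_def by auto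
    moreover have "c \<otimes>\<^bsub>CP_ring X P\<^esub> g \<in> J"
      using ideal.I_l_closed[OF J(1) g(1)] CP_carrier_const unfolding c_def by simp
    ultimately have "m \<oplus>\<^bsub>CP_ring X P\<^esub> c \<otimes>\<^bsub>CP_ring X P\<^esub> g \<in> J"
      by (rule additive_subgroup.a_closed[OF ideal.axioms(1)[OF J(1)]])
    moreover have "m \<oplus>\<^bsub>CP_ring X P\<^esub> c \<otimes>\<^bsub>CP_ring X P\<^esub> g = \<one>\<^bsub>CP_ring X P\<^esub>"
      using g(2) by (auto simp: m_def c_def fun_eq_iff field_simps)
    ultimately show ?thesis using ideal.one_imp_carrier[OF J(1)] by simp
  qed simp
qed

lemma M_ideal_vanishes:
  assumes "x \<in> M_ideal (CP_ring X P) a" "a \<in> CP_carrier X P" "p \<in> topspace X" "a p = 0"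
  shows "x p = 0"
  using assms maximalideal_vanishing_at unfolding M_ideal_def by auto

lemma z_ideal_if_PP_space:
  assumes PP: "PP_space X P" and I: "ideal I (CP_ring X P)"
  shows "z_ideal I (CP_ring X P)"
  unfolding z_ideal_def
proof (intro conjI I ballI subsetI)
  fix a x assume a: "a \<in> I" and x: "x \<in> M_ideal (CP_ring X P) a"
  have aC: "a \<in> CP_carrier X P" using ideal.Icarr[OF I a] by simp
  have xC: "x \<in> CP_carrier X P" using x unfolding M_ideal_def by simp
  obtain b where bC: "b \<in> CP_carrier X P" and aba: "a = (\<lambda>y. a y * b y * a y)"
    using PP aC unfolding PP_space_def von_neumann_regular_def by auto
  have "(\<lambda>y. b y * x y) \<otimes>\<^bsub>CP_ring X P\<^esub> a \<in> I"
    using ideal.I_l_closed[OF I a] CP_carrier_mult[OF bC xC] by simp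
  moreover have "(\<lambda>y. b y * x y) \<otimes>\<^bsub>CP_ring X P\<^esub> a = x"
  proof
    fix y
    show "((\<lambda>y. b y * x y) \<otimes>\<^bsub>CP_ring X P\<^esub> a) y = x y"
    proof (cases "y \<in> topspace X \<and> a y \<noteq> 0")
      case True
      then have "a y * b y = 1" using fun_cong[OF aba, of y] by (simp add: field_simps)
      then show ?thesis by (simp add: algebra_simps)
    next
      case False
      then show ?thesis
        using M_ideal_vanishes[OF x aC] CP_carrier_vanishes[OF xC] by auto
    qed
  qed
  ultimately show "x \<in> I" by simp
qed

lemma regular_if_cube_root_in_cgenideal_add_annihilator:
  assumes f: "f \<in> CP_carrier X P"
    and g: "(\<lambda>x. root 3 (f x))
              \<in> PIdl\<^bsub>CP_ring X P\<^esub> f <+>\<^bsub>CP_ring X P\<^esub> annihilator (CP_ring X P) f"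
  shows "\<exists>b\<in>CP_carrier X P. f = (\<lambda>x. f x * b x * f x)"
proof -
  obtain h k where hC: "h \<in> CP_carrier X P" and "k \<in> CP_carrier X P"
    and kf: "\<And>y. k y * f y = 0" and hk: "\<And>y. root 3 (f y) = h y * f y + k y"
    using g unfolding set_add_def' cgenideal_def annihilator_def by (auto simp: fun_eq_iff)
  define b where "b = (\<lambda>y. h y * h y * root 3 (f y))"
  have "f y = f y * b y * f y" for y
  proof (cases "f y = 0")
    case False
    then have "root 3 (f y) = h y * f y" using kf[of y] hk[of y] by simp
    moreover have "root 3 (f y) ^ 3 = f y" by (simp add: odd_real_root_pow)
    ultimately show ?thesis unfolding b_def by (simp add: power3_eq_cube algebra_simps)
  qed simp
  moreover have "b \<in> CP_carrier X P"
    unfolding b_def using CP_carrier_mult CP_carrier_cube_root f hC by blast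
  ultimately show ?thesis by (auto simp: fun_eq_iff)
qed

lemma PP_space_if_essential_ideals_are_z_ideals:
  assumes z: "\<forall>I. essential_ideal I (CP_ring X P) \<longrightarrow> z_ideal I (CP_ring X P)"
  shows "PP_space X P"
  unfolding PP_space_def von_neumann_regular_def
proof
  fix f assume f: "f \<in> carrier (CP_ring X P)"
  let ?g = "\<lambda>x. root 3 (f x)"
  have g: "?g \<in> carrier (CP_ring X P)" using CP_carrier_cube_root f by simp
  have "?g \<otimes>\<^bsub>CP_ring X P\<^esub> ?g \<otimes>\<^bsub>CP_ring X P\<^esub> ?g = f"
    by (simp add: fun_eq_iff odd_real_root_pow flip: power3_eq_cube)
  then have "?g \<in> M_ideal (CP_ring X P) f"
    using cring.cube_root_in_M_ideal[OF cring_CP_ring g] by simp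
  then have "?g \<in> PIdl\<^bsub>CP_ring X P\<^esub> f <+>\<^bsub>CP_ring X P\<^esub> annihilator (CP_ring X P) f"
    using cring.M_ideal_subset_cgenideal_add_annihilator[OF cring_CP_ring z f] by blast
  then show "\<exists>b\<in>carrier (CP_ring X P). f = f \<otimes>\<^bsub>CP_ring X P\<^esub> b \<otimes>\<^bsub>CP_ring X P\<^esub> f"
    using regular_if_cube_root_in_cgenideal_add_annihilator f by simp
qed

end

theorem corollary2p19:
  fixes X :: "'a topology" and P :: "'a set set"
  assumes "t1_space X"
    and "closed_ideal X P"
  shows "PP_space X P \<longleftrightarrow>
           (\<forall>I. essential_ideal I (CP_ring X P) \<longrightarrow> z_ideal I (CP_ring X P))"
proof
  assume "PP_space X P"
  then show "\<forall>I. essential_ideal I (CP_ring X P) \<longrightarrow> z_ideal I (CP_ring X P)"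
    using z_ideal_if_PP_space[OF assms(2)] unfolding essential_ideal_def by blast
next
  assume "\<forall>I. essential_ideal I (CP_ring X P) \<longrightarrow> z_ideal I (CP_ring X P)"
  then show "PP_space X P"
    by (rule PP_space_if_essential_ideals_are_z_ideals[OF assms(2)])
qed

end
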